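(* Let $c\ge0$, let $\rho:[0,\infty)\to[0,\infty)$ be non-decreasing and differentiable, and let $f,g:[0,\infty)\to[0,\infty)$ be Borel measurable and such that $$\Delta:=\sup_{r\ge r_0}\rho\Big(\int_{r_0}^r g(u)du+c\Big)^{1+\beta}\int_r^\infty f(u)du<\infty$$ for some $r_0\ge0$ and $\beta\ge0$. Then: (i) if $\beta>0$, for all $r\ge r_0$, $$\int_r^\infty\rho\Big(\int_{r_0}^u g(v)dv+c\Big)f(u)du\le\frac{\Delta(1+\beta)}{\beta}\rho\Big(\int_{r_0}^r g(u)du+c\Big)^{-\beta};$$ (ii) if $\beta=0$ and either $\int_{r_0}^\infty g(r)dr<\infty$ or $\rho$ is bounded, then for all $r\ge r_0$, $$\int_r^\infty\rho\Big(\int_{r_0}^u g(v)dv+c\Big)f(u)du\le\Delta+\Delta\ln\frac{\rho\big(\int_{r_0}^\infty g(u)du+c\big)}{\rho\big(\int_{r_0}^r g(u)du+c\big)},$$ where in the bounded case $\rho(\int_{r_0}^\infty g+c)$ is understood as $\lim_{t\to\infty}\rho(t)$ if the integral diverges. *)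

theory Defs
  imports "HOL-Analysis.Analysis"
begin

text \<open>Extension of rho to [0,infinity]: at infinity it is the limit (= supremum,
  rho being non-decreasing) of rho(t) as t tends to infinity.\<close>
definition rhobar :: "(real \<Rightarrow> real) \<Rightarrow> ennreal \<Rightarrow> ennreal" where
  "rhobar rho x = (if x = top then (SUP t\<in>{0..}. ennreal (rho t)) else ennreal (rho (enn2real x)))"

definition epowr :: "ennreal \<Rightarrow> real \<Rightarrow> ennreal" where
  "epowr x a =
     (if a = 0 then 1
      else if x = top then (if a > 0 then top else 0)
      else if x = 0 then (if a > 0 then 0 else top)
      else ennreal (enn2real x powr a))"

definition Gint :: "(real \<Rightarrow> real) \<Rightarrow> real \<Rightarrow> real \<Rightarrow> ennreal" where
  "Gint g a b = (\<integral>\<^sup>+ u\<in>{a..b}. ennreal (g u) \<partial>lborel)"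

end

theory Submission
  imports Defs
begin

text \<open>
  Put h(u) = \<rho>(\<integral> g over [r0,u] + c), which is non-decreasing, and F(u) = \<integral> f over [u,\<infinity>).
  The layer-cake formula writes \<integral> h f over [r,\<infinity>) as the integral over t > 0 of \<integral> f over
  {u \<ge> r. h(u) > t}. For t < h(r) this inner integral is at most F(r). For t \<ge> h(r) the set is a
  half-line on which h > t, so h(u)^(1+\<beta>) F(u) \<le> \<Delta> bounds it by \<Delta> t^(-1-\<beta>) (through a limit
  from the right when the half-line is open), and it vanishes for t \<ge> sup h. Hence
  \<integral> h f \<le> h(r) F(r) + \<Delta> \<integral> t^(-1-\<beta>) dt over [h(r), sup h), where h(r) F(r) \<le> \<Delta> h(r)^(-\<beta>),
  and the last integral is at most h(r)^(-\<beta>)/\<beta> if \<beta> > 0 and ln(sup h / h(r)) if \<beta> = 0.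
  All values are taken in ennreal.\<close>

lemma upclosed_real_eq_Ici_or_Ioi:
  fixes U :: "real set"
  assumes up: "\<forall>x\<in>U. \<forall>z\<ge>x. z \<in> U" and ne: "U \<noteq> {}" and bdd: "bdd_below U"
  shows "U = {Inf U..} \<or> U = {Inf U<..}"
proof -
  have "{Inf U<..} \<subseteq> U"
  proof
    fix z assume "z \<in> {Inf U<..}"
    then obtain x where "x \<in> U" "x < z" using cInf_less_iff[OF ne bdd] by auto
    then show "z \<in> U" using up by auto
  qed
  moreover have "U \<subseteq> {Inf U..}" using cInf_lower[OF _ bdd] by auto
  ultimately show ?thesis
    by (cases "Inf U \<in> U") (auto simp: subset_iff, (metis order_le_less)+)
qed

lemma upclosed_real_in_borel:
  fixes U :: "real set"
  assumes up: "\<forall>x\<in>U. \<forall>z\<ge>x. z \<in> U"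
  shows "U \<in> sets borel"
proof (cases "U = {}")
  case False
  show ?thesis
  proof (cases "bdd_below U")
    case True
    then have "U = {Inf U..} \<or> U = {Inf U<..}"
      by (rule upclosed_real_eq_Ici_or_Ioi[OF up False])
    then show ?thesis by (metis atLeast_borel greaterThan_borel)
  next
    case unbdd: False
    have "z \<in> U" for z
    proof -
      obtain x where "x \<in> U" "x < z" using unbdd unfolding bdd_below_def by (meson not_le)
      then show ?thesis using up less_imp_le by blast
    qed
    then have "U = UNIV" by blast
    then show ?thesis by simp
  qed
qed simp

lemma borel_measurable_mono_linorder:
  fixes h :: "real \<Rightarrow> 'b::{linorder_topology, second_countable_topology}"
  assumes "mono h"
  shows "h \<in> borel_measurable borel"
proof (rule borel_measurableI_greater)
  fix y
  have "{x. y < h x} \<in> sets borel"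
    by (rule upclosed_real_in_borel) (use assms in \<open>auto dest: monoD intro: less_le_trans\<close>)
  then show "{x \<in> space borel. y < h x} \<in> sets borel" by simp
qed

lemma nn_integral_Ioi_le:
  fixes \<phi> :: "real \<Rightarrow> ennreal"
  assumes [measurable]: "\<phi> \<in> borel_measurable borel"
    and le: "\<And>u. a < u \<Longrightarrow> (\<integral>\<^sup>+x\<in>{u..}. \<phi> x \<partial>lborel) \<le> b"
  shows "(\<integral>\<^sup>+x\<in>{a<..}. \<phi> x \<partial>lborel) \<le> b"
proof -
  define A where "A n = {a + 1 / Suc n..}" for n :: nat
  have inc: "incseq A"
    unfolding A_def by (intro monoI) (simp add: frac_le)
  have union: "(\<Union>n. A n) = {a<..}"
  proof (intro equalityI subsetI)
    fix z assume "z \<in> {a<..}"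
    then obtain n where "1 / Suc n < z - a"
      by (metis diff_gt_0_iff_gt greaterThan_iff nat_approx_posE)
    then have "z \<in> A n" by (simp add: A_def)
    then show "z \<in> (\<Union>n. A n)" by blast
  next
    fix z assume "z \<in> (\<Union>n. A n)"
    then obtain n where "a + 1 / Suc n \<le> z" by (auto simp: A_def)
    moreover have "0 < 1 / real (Suc n)" by simp
    ultimately show "z \<in> {a<..}" unfolding greaterThan_iff by linarith
  qed
  have "(\<integral>\<^sup>+x\<in>{a<..}. \<phi> x \<partial>lborel) = emeasure (density lborel \<phi>) (\<Union>n. A n)"
    unfolding union by (simp add: emeasure_density)
  also have "\<dots> = (SUP n. emeasure (density lborel \<phi>) (A n))"
    by (rule SUP_emeasure_incseq[symmetric, OF _ inc]) (auto simp: A_def)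
  also have "\<dots> \<le> b"
  proof (rule SUP_least)
    fix n
    have "a < a + 1 / Suc n" by simp
    then show "emeasure (density lborel \<phi>) (A n) \<le> b"
      using le by (simp add: A_def emeasure_density)
  qed
  finally show ?thesis .
qed

lemma nn_integral_upclosed_le:
  fixes \<phi> :: "real \<Rightarrow> ennreal" and U :: "real set"
  assumes [measurable]: "\<phi> \<in> borel_measurable borel"
    and up: "\<forall>x\<in>U. \<forall>z\<ge>x. z \<in> U" and bdd: "bdd_below U"
    and le: "\<And>u. u \<in> U \<Longrightarrow> (\<integral>\<^sup>+x\<in>{u..}. \<phi> x \<partial>lborel) \<le> b"
  shows "(\<integral>\<^sup>+x\<in>U. \<phi> x \<partial>lborel) \<le> b"
proof (cases "U = {}")
  case False
  then have "U = {Inf U..} \<or> U = {Inf U<..}"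
    by (rule upclosed_real_eq_Ici_or_Ioi[OF up _ bdd])
  then consider "U = {Inf U..}" | "U = {Inf U<..}" by blast
  then show ?thesis
  proof cases
    case 1
    then show ?thesis using le[of "Inf U"] by auto
  next
    case 2
    then show ?thesis using nn_integral_Ioi_le[of \<phi> "Inf U" b] le by auto
  qed
qed simp

lemma nn_integral_superlevel_le:
  fixes h \<phi> :: "real \<Rightarrow> ennreal" and t :: ennreal
  assumes h: "mono h" and [measurable]: "\<phi> \<in> borel_measurable borel"
    and le: "\<And>u. r \<le> u \<Longrightarrow> t < h u \<Longrightarrow> (\<integral>\<^sup>+x\<in>{u..}. \<phi> x \<partial>lborel) \<le> b"
  shows "(\<integral>\<^sup>+x\<in>{u. r \<le> u \<and> t < h u}. \<phi> x \<partial>lborel) \<le> b"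
proof (rule nn_integral_upclosed_le)
  show "\<forall>x\<in>{u. r \<le> u \<and> t < h u}. \<forall>z\<ge>x. z \<in> {u. r \<le> u \<and> t < h u}"
    using h by (auto dest: monoD intro: less_le_trans)
qed (use le in \<open>auto simp: bdd_below_def\<close>)

lemma emeasure_lborel_Ici_top: "emeasure lborel {(a::real)..} = top"
proof (rule ccontr)
  assume "emeasure lborel {a..} \<noteq> top"
  then obtain n where n: "emeasure lborel {a..} < of_nat n"
    using ennreal_Ex_less_of_nat top.not_eq_extremum by blast
  have "emeasure lborel {a..a + real n} \<le> emeasure lborel {a..}"
    by (rule emeasure_mono) auto
  then show False using n by (simp add: ennreal_of_nat_eq_real_of_nat)
qed

lemma emeasure_lborel_below_ennreal:
  "emeasure lborel {t::real. 0 \<le> t \<and> ennreal t < x} = x"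
proof (cases "x = top")
  case True
  then have "{t. 0 \<le> t \<and> ennreal t < x} = {0..}" by auto
  then show ?thesis using True by (simp add: emeasure_lborel_Ici_top)
next
  case False
  then obtain a where a: "x = ennreal a" "a \<ge> 0" by (cases x) auto
  then have "{t. 0 \<le> t \<and> ennreal t < x} = {0..<a}" by (auto simp: ennreal_less_iff)
  then show ?thesis using a by simp
qed

lemma nn_integral_layer_cake:
  fixes h \<phi> :: "real \<Rightarrow> ennreal"
  assumes [measurable]: "h \<in> borel_measurable borel" "\<phi> \<in> borel_measurable borel"
  shows "(\<integral>\<^sup>+u. h u * \<phi> u \<partial>lborel)
    = (\<integral>\<^sup>+t\<in>{0..}. (\<integral>\<^sup>+u\<in>{u. ennreal t < h u}. \<phi> u \<partial>lborel) \<partial>lborel)"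
proof -
  define K where "K t u = indicator {t. 0 \<le> t \<and> ennreal t < h u} t * \<phi> u" for t u
  have K_meas: "case_prod K \<in> borel_measurable (lborel \<Otimes>\<^sub>M lborel)"
  proof -
    have "case_prod K
        = (\<lambda>p. indicator {p. 0 \<le> fst p \<and> ennreal (fst p) < h (snd p)} p * \<phi> (snd p))"
      by (auto simp: K_def fun_eq_iff indicator_def)
    also have "\<dots> \<in> borel_measurable (lborel \<Otimes>\<^sub>M lborel)" by measurable
    finally show ?thesis .
  qed
  have "(\<integral>\<^sup>+u. h u * \<phi> u \<partial>lborel) = (\<integral>\<^sup>+u. (\<integral>\<^sup>+t. K t u \<partial>lborel) \<partial>lborel)"
  proof (rule nn_integral_cong)
    fix u
    have "(\<integral>\<^sup>+t. K t u \<partial>lborel) = emeasure lborel {t. 0 \<le> t \<and> ennreal t < h u} * \<phi> u"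
      unfolding K_def by (subst nn_integral_multc) auto
    then show "h u * \<phi> u = (\<integral>\<^sup>+t. K t u \<partial>lborel)"
      by (simp add: emeasure_lborel_below_ennreal)
  qed
  also have "\<dots> = (\<integral>\<^sup>+t. (\<integral>\<^sup>+u. K t u \<partial>lborel) \<partial>lborel)"
    by (rule lborel_pair.Fubini'[OF K_meas])
  also have "\<dots> = (\<integral>\<^sup>+t\<in>{0..}. (\<integral>\<^sup>+u\<in>{u. ennreal t < h u}. \<phi> u \<partial>lborel) \<partial>lborel)"
  proof (rule nn_integral_cong)
    fix t
    have "(\<integral>\<^sup>+u. K t u \<partial>lborel)
        = (\<integral>\<^sup>+u. \<phi> u * indicator {u. ennreal t < h u} u * indicator {0..} t \<partial>lborel)"
      by (intro nn_integral_cong) (auto simp: K_def indicator_def)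
    also have "\<dots> = (\<integral>\<^sup>+u\<in>{u. ennreal t < h u}. \<phi> u \<partial>lborel) * indicator {0..} t"
      by (rule nn_integral_multc) measurable
    finally show "(\<integral>\<^sup>+u. K t u \<partial>lborel)
        = (\<integral>\<^sup>+u\<in>{u. ennreal t < h u}. \<phi> u \<partial>lborel) * indicator {0..} t" .
  qed
  finally show ?thesis .
qed

lemma nn_integral_weighted_tail_le:
  fixes h \<phi> B :: "real \<Rightarrow> ennreal" and N :: ennreal
  assumes h: "mono h" and [measurable]: "\<phi> \<in> borel_measurable borel" "B \<in> borel_measurable borel"
    and B: "\<And>u t. r \<le> u \<Longrightarrow> 0 < t \<Longrightarrow> ennreal t < h u \<Longrightarrow> (\<integral>\<^sup>+x\<in>{u..}. \<phi> x \<partial>lborel) \<le> B t"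
    and N: "\<And>u. r \<le> u \<Longrightarrow> h u \<le> N"
  shows "(\<integral>\<^sup>+u\<in>{r..}. h u * \<phi> u \<partial>lborel)
     \<le> h r * (\<integral>\<^sup>+x\<in>{r..}. \<phi> x \<partial>lborel)
       + (\<integral>\<^sup>+t\<in>{t. 0 < t \<and> h r \<le> ennreal t \<and> ennreal t < N}. B t \<partial>lborel)"
proof -
  have [measurable]: "h \<in> borel_measurable borel" by (rule borel_measurable_mono_linorder[OF h])
  define F where "F = (\<integral>\<^sup>+x\<in>{r..}. \<phi> x \<partial>lborel)"
  define L where "L t = (\<integral>\<^sup>+u\<in>{u. ennreal t < h u}. \<phi> u * indicator {r..} u \<partial>lborel)" for t
  have L_le_F: "L t \<le> F" for t
    unfolding L_def F_def by (intro nn_integral_mono) (auto simp: indicator_def)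
  have L_le_B: "L t \<le> B t" if "0 < t" for t
  proof -
    have "L t = (\<integral>\<^sup>+u\<in>{u. r \<le> u \<and> ennreal t < h u}. \<phi> u \<partial>lborel)"
      unfolding L_def by (intro nn_integral_cong) (auto simp: indicator_def)
    also have "\<dots> \<le> B t"
      by (rule nn_integral_superlevel_le[OF h]) (use B that in auto)
    finally show ?thesis .
  qed
  have L_eq_0: "L t = 0" if "N \<le> ennreal t" for t
  proof -
    have "\<phi> u * indicator {r..} u * indicator {u. ennreal t < h u} u = 0" for u
      using N[of u] that by (auto simp: indicator_def)
    then show ?thesis by (simp only: L_def) simp
  qed
  have "(\<integral>\<^sup>+u\<in>{r..}. h u * \<phi> u \<partial>lborel) = (\<integral>\<^sup>+u. h u * (\<phi> u * indicator {r..} u) \<partial>lborel)"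
    by (simp add: mult.assoc)
  also have "\<dots> = (\<integral>\<^sup>+t\<in>{0..}. L t \<partial>lborel)"
    unfolding L_def by (rule nn_integral_layer_cake) measurable
  also have "\<dots> \<le> (\<integral>\<^sup>+t. indicator {t. 0 \<le> t \<and> ennreal t < h r} t * F
       + B t * indicator {t. 0 < t \<and> h r \<le> ennreal t \<and> ennreal t < N} t \<partial>lborel)"
  proof (rule nn_integral_mono_AE)
    show "AE t in lborel. L t * indicator {0..} t \<le> indicator {t. 0 \<le> t \<and> ennreal t < h r} t * F
       + B t * indicator {t. 0 < t \<and> h r \<le> ennreal t \<and> ennreal t < N} t"
      using AE_lborel_singleton[of 0]
    proof eventually_elim
      case (elim t)
      show ?case
      proof (cases "0 < t")
        case t: True
        consider "ennreal t < h r" | "h r \<le> ennreal t" "ennreal t < N" | "N \<le> ennreal t"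
          using not_le by blast
        then show ?thesis
          by cases (use t L_le_F L_le_B L_eq_0 in \<open>auto simp: indicator_def\<close>)
      qed (use elim in \<open>simp add: indicator_def\<close>)
    qed
  qed
  also have "\<dots> = h r * F + (\<integral>\<^sup>+t\<in>{t. 0 < t \<and> h r \<le> ennreal t \<and> ennreal t < N}. B t \<partial>lborel)"
    by (subst nn_integral_add) (auto simp: nn_integral_multc emeasure_lborel_below_ennreal)
  finally show ?thesis by (simp add: F_def)
qed

lemma nn_integral_powr_Ici:
  fixes a \<beta> :: real
  assumes a: "0 < a" and \<beta>: "0 < \<beta>"
  shows "(\<integral>\<^sup>+t\<in>{a..}. ennreal (t powr -(1 + \<beta>)) \<partial>lborel) = ennreal (a powr -\<beta> / \<beta>)"
proof -
  have "DERIV (\<lambda>t. - (t powr -\<beta>) / \<beta>) t :> t powr -(1 + \<beta>)" if "a \<le> t" for t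
  proof -
    have "DERIV (\<lambda>t. - (t powr -\<beta>) / \<beta>) t :> - (- \<beta> * t powr (- \<beta> - 1)) / \<beta>"
      using that a by (auto intro!: derivative_eq_intros)
    moreover have "- \<beta> - 1 = -(1 + \<beta>)" by simp
    ultimately show ?thesis using \<beta> by simp
  qed
  moreover have "((\<lambda>t. - (t powr -\<beta>) / \<beta>) \<longlongrightarrow> 0) at_top"
  proof -
    have "((\<lambda>t::real. t powr -\<beta>) \<longlongrightarrow> 0) at_top"
      by (rule tendsto_neg_powr[OF _ filterlim_ident]) (use \<beta> in simp)
    then have "((\<lambda>t::real. - (t powr -\<beta>)) \<longlongrightarrow> 0) at_top"
      using tendsto_minus by fastforce
    from tendsto_divide_zero[OF this, of \<beta>] show ?thesis by simp
  qed
  ultimately have "(\<integral>\<^sup>+t\<in>{a..}. ennreal (t powr -(1 + \<beta>)) \<partial>lborel) = ennreal (0 - (- (a powr -\<beta>) / \<beta>))"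
    by (intro nn_integral_FTC_atLeast) auto
  then show ?thesis by simp
qed

lemma nn_integral_powr_minus_one_Icc:
  fixes a b :: real
  assumes a: "0 < a" and ab: "a \<le> b"
  shows "(\<integral>\<^sup>+t\<in>{a..b}. ennreal (t powr -1) \<partial>lborel) = ennreal (ln b - ln a)"
proof (rule nn_integral_FTC_Icc[OF _ _ _ ab])
  fix t assume "t \<in> {a..b}"
  then have t: "0 < t" using a by auto
  show "DERIV ln t :> t powr -1" using DERIV_ln[OF t] t by (simp add: powr_neg_one divide_inverse)
  show "0 \<le> t powr -1" by simp
qed auto

lemma epowr_ennreal: "0 < a \<Longrightarrow> p \<noteq> 0 \<Longrightarrow> epowr (ennreal a) p = ennreal (a powr p)"
  by (simp add: epowr_def)

lemma epowr_one: "epowr x 1 = x"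
  by (cases x) (auto simp: epowr_def)

lemma epowr_mult_le_imp_le_powr:
  fixes D F x :: ennreal and p t :: real
  assumes p: "0 < p" and t: "0 < t" and tx: "ennreal t < x" and le: "epowr x p * F \<le> D"
  shows "F \<le> D * ennreal (t powr -p)"
proof (cases x)
  case (real a)
  then have at: "t < a" using tx t by (simp add: ennreal_less_iff)
  have "1 \<le> a powr p / t powr p"
    using at t p by (simp add: powr_mono2)
  then have "1 \<le> t powr -p * a powr p"
    by (simp add: powr_minus divide_inverse mult.commute)
  then have "ennreal 1 \<le> ennreal (t powr -p * a powr p)"
    by (rule ennreal_leI)
  from mult_right_mono[OF this, of F] have "F \<le> ennreal (t powr -p * a powr p) * F"
    by simp
  also have "\<dots> = ennreal (t powr -p) * (epowr x p * F)"
    using real at t p by (simp add: epowr_ennreal ennreal_mult mult.assoc)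
  also have "\<dots> \<le> ennreal (t powr -p) * D"
    using le by (rule mult_left_mono) simp
  finally show ?thesis by (simp add: mult.commute)
next
  case top
  then have "top * F \<le> D" using le p by (simp add: epowr_def)
  then show ?thesis
    using t by (cases "F = 0") (simp_all add: top_unique ennreal_top_mult)
qed

lemma ennreal_mult_le_of_epowr_mult_le:
  fixes F D :: ennreal
  assumes a: "0 < a" and \<beta>: "0 < \<beta>" and le: "epowr (ennreal a) (1 + \<beta>) * F \<le> D"
  shows "ennreal a * F \<le> D * ennreal (a powr -\<beta>)"
proof -
  have "ennreal a * F = ennreal (a powr -\<beta>) * ennreal (a powr (1 + \<beta>)) * F"
    using a by (simp add: ennreal_mult[symmetric] powr_add[symmetric])
  also have "\<dots> = ennreal (a powr -\<beta>) * (epowr (ennreal a) (1 + \<beta>) * F)"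
    using a \<beta> by (simp add: epowr_ennreal mult.assoc)
  also have "\<dots> \<le> ennreal (a powr -\<beta>) * D"
    using le by (rule mult_left_mono) simp
  finally show ?thesis by (simp add: mult.commute)
qed

lemma rhobar_mono:
  assumes rho: "mono_on {0..} rho" and le: "x \<le> y"
  shows "rhobar rho x \<le> rhobar rho y"
proof (cases "y = top")
  case True
  have "ennreal (rho (enn2real x)) \<le> (SUP t\<in>{0..}. ennreal (rho t))"
    by (rule SUP_upper) simp
  then show ?thesis using True by (simp add: rhobar_def)
next
  case False
  then have "x \<noteq> top" "enn2real x \<le> enn2real y"
    using le by (auto simp: enn2real_mono top.not_eq_extremum top_unique)
  then show ?thesis
    using False rho by (simp add: rhobar_def ennreal_leI mono_onD)
qed

lemma rhobar_less_top:
  assumes "x \<noteq> top \<or> bounded (rho ` {0..})"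
  shows "rhobar rho x < top"
proof (cases "x = top")
  case True
  then obtain M where M: "\<And>t. 0 \<le> t \<Longrightarrow> rho t \<le> M"
    using assms unfolding bounded_iff by (auto dest: abs_le_D1)
  have "(SUP t\<in>{0..}. ennreal (rho t)) \<le> ennreal M"
    by (rule SUP_least) (simp add: M ennreal_leI)
  then show ?thesis using True by (simp add: rhobar_def order.strict_trans1)
qed (simp add: rhobar_def)

lemma mono_Gint: "mono (Gint g a)"
  unfolding Gint_def by (intro monoI nn_integral_mono) (auto simp: indicator_def)

lemma Gint_le_nn_integral_Ici: "Gint g a b \<le> (\<integral>\<^sup>+u\<in>{a..}. ennreal (g u) \<partial>lborel)"
  unfolding Gint_def by (intro nn_integral_mono) (auto simp: indicator_def)

lemma nn_integral_weighted_tail_le_powr: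
  fixes h \<phi> :: "real \<Rightarrow> ennreal" and \<beta> :: real and \<Delta> :: ennreal
  assumes h: "mono h" and \<phi>: "\<phi> \<in> borel_measurable borel"
    and \<beta>: "0 < \<beta>" and \<Delta>_fin: "\<Delta> < top"
    and \<Delta>: "\<And>u. r \<le> u \<Longrightarrow> epowr (h u) (1 + \<beta>) * (\<integral>\<^sup>+x\<in>{u..}. \<phi> x \<partial>lborel) \<le> \<Delta>"
  shows "(\<integral>\<^sup>+u\<in>{r..}. h u * \<phi> u \<partial>lborel) \<le> \<Delta> * ennreal ((1 + \<beta>) / \<beta>) * epowr (h r) (- \<beta>)"
proof -
  define F where "F = (\<integral>\<^sup>+x\<in>{r..}. \<phi> x \<partial>lborel)"
  define S where "S = {t. 0 < t \<and> h r \<le> ennreal t \<and> ennreal t < top}"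
  have F: "epowr (h r) (1 + \<beta>) * F \<le> \<Delta>"
    using \<Delta>[of r] by (simp add: F_def)
  have cake: "(\<integral>\<^sup>+u\<in>{r..}. h u * \<phi> u \<partial>lborel)
      \<le> h r * F + (\<integral>\<^sup>+t\<in>S. \<Delta> * ennreal (t powr -(1 + \<beta>)) \<partial>lborel)"
  proof -
    have B: "(\<integral>\<^sup>+x\<in>{u..}. \<phi> x \<partial>lborel) \<le> \<Delta> * ennreal (t powr -(1 + \<beta>))"
      if "r \<le> u" "0 < t" "ennreal t < h u" for u t
      by (rule epowr_mult_le_imp_le_powr[OF _ that(2,3) \<Delta>[OF that(1)]]) (use \<beta> in simp)
    show ?thesis
      unfolding F_def S_def by (rule nn_integral_weighted_tail_le[OF h \<phi>]) (measurable, fact B, simp)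
  qed
  consider "h r = 0" | "h r = top" | a where "h r = ennreal a" "0 < a"
  proof (cases "h r")
    case (real a)
    then show ?thesis using that by (cases "a = 0") auto
  qed (use that in auto)
  then show ?thesis
  proof cases
    case 1
    then show ?thesis
      using cake \<beta> by (cases "\<Delta> = 0") (simp_all add: epowr_def ennreal_mult_top)
  next
    case 2
    then have "top * F \<le> \<Delta>" using F \<beta> by (simp add: epowr_def)
    then have "F = 0" using \<Delta>_fin by (auto simp: ennreal_top_mult split: if_splits)
    moreover have "S = {}" using 2 by (auto simp: S_def top_unique)
    ultimately show ?thesis using cake 2 by simp
  next
    case (3 a)
    have hF: "h r * F \<le> \<Delta> * ennreal (a powr -\<beta>)"
      using ennreal_mult_le_of_epowr_mult_le[OF 3(2) \<beta>] F 3(1) by simp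
    have "S = {a..}" using 3 by (auto simp: S_def ennreal_le_iff)
    then have I: "(\<integral>\<^sup>+t\<in>S. \<Delta> * ennreal (t powr -(1 + \<beta>)) \<partial>lborel) = \<Delta> * ennreal (a powr -\<beta> / \<beta>)"
      using nn_integral_powr_Ici[OF 3(2) \<beta>] by (simp add: nn_integral_cmult mult.assoc)
    have "(\<integral>\<^sup>+u\<in>{r..}. h u * \<phi> u \<partial>lborel)
        \<le> \<Delta> * ennreal (a powr -\<beta>) + \<Delta> * ennreal (a powr -\<beta> / \<beta>)"
      using cake add_right_mono[OF hF] unfolding I by (rule order_trans)
    also have "\<dots> = \<Delta> * (ennreal (a powr -\<beta>) + ennreal (a powr -\<beta> / \<beta>))"
      by (simp add: distrib_left)
    also have "ennreal (a powr -\<beta>) + ennreal (a powr -\<beta> / \<beta>) = ennreal ((1 + \<beta>) / \<beta>) * epowr (h r) (- \<beta>)"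
      using 3 \<beta> by (simp add: epowr_ennreal ennreal_mult'[symmetric] ennreal_plus[symmetric] field_simps)
    finally show ?thesis by (simp add: mult.assoc)
  qed
qed

lemma nn_integral_weighted_tail_le_ln:
  fixes h \<phi> :: "real \<Rightarrow> ennreal" and N \<Delta> :: ennreal
  assumes h: "mono h" and \<phi>: "\<phi> \<in> borel_measurable borel"
    and N: "\<And>u. r \<le> u \<Longrightarrow> h u \<le> N" and N_fin: "N < top"
    and \<Delta>: "\<And>u. r \<le> u \<Longrightarrow> h u * (\<integral>\<^sup>+x\<in>{u..}. \<phi> x \<partial>lborel) \<le> \<Delta>"
  shows "(\<integral>\<^sup>+u\<in>{r..}. h u * \<phi> u \<partial>lborel)
    \<le> \<Delta> + \<Delta> * (if h r = 0 then top else ennreal (ln (enn2real N / enn2real (h r))))"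
proof -
  define F where "F = (\<integral>\<^sup>+x\<in>{r..}. \<phi> x \<partial>lborel)"
  define S where "S = {t. 0 < t \<and> h r \<le> ennreal t \<and> ennreal t < N}"
  have cake: "(\<integral>\<^sup>+u\<in>{r..}. h u * \<phi> u \<partial>lborel)
      \<le> h r * F + (\<integral>\<^sup>+t\<in>S. \<Delta> * ennreal (t powr -1) \<partial>lborel)"
  proof -
    have B: "(\<integral>\<^sup>+x\<in>{u..}. \<phi> x \<partial>lborel) \<le> \<Delta> * ennreal (t powr -1)"
      if "r \<le> u" "0 < t" "ennreal t < h u" for u t
      using epowr_mult_le_imp_le_powr[of 1 t "h u"] \<Delta>[OF that(1)] that by (simp add: epowr_one)
    show ?thesis
      unfolding F_def S_def by (rule nn_integral_weighted_tail_le[OF h \<phi> _ B N]) measurable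
  qed
  have hF: "h r * F \<le> \<Delta>" using \<Delta>[of r] by (simp add: F_def)
  show ?thesis
  proof (cases "h r = 0")
    case True
    then show ?thesis using cake by (cases "\<Delta> = 0") (simp_all add: ennreal_mult_top)
  next
    case False
    obtain a where a: "h r = ennreal a" "0 < a"
      using False N[of r] N_fin by (cases "h r") (auto simp: not_less)
    obtain b where b: "N = ennreal b" "0 \<le> b"
      using N_fin by (cases N) auto
    have ab: "a \<le> b" using N[of r] a b by simp
    have "(\<integral>\<^sup>+t\<in>S. \<Delta> * ennreal (t powr -1) \<partial>lborel) \<le> (\<integral>\<^sup>+t\<in>{a..b}. \<Delta> * ennreal (t powr -1) \<partial>lborel)"
      using a b by (intro nn_integral_mono) (auto simp: S_def indicator_def ennreal_le_iff ennreal_less_iff)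
    also have "\<dots> = \<Delta> * ennreal (ln b - ln a)"
      using nn_integral_powr_minus_one_Icc[OF a(2) ab] by (simp add: nn_integral_cmult mult.assoc)
    finally have I: "(\<integral>\<^sup>+t\<in>S. \<Delta> * ennreal (t powr -1) \<partial>lborel) \<le> \<Delta> * ennreal (ln b - ln a)" .
    have "(\<integral>\<^sup>+u\<in>{r..}. h u * \<phi> u \<partial>lborel) \<le> \<Delta> + \<Delta> * ennreal (ln b - ln a)"
      using cake add_mono[OF hF I] by (rule order_trans)
    then show ?thesis using a b ab False by (simp add: ln_div)
  qed
qed

theorem proposition2p6:
  fixes rho f g :: "real \<Rightarrow> real" and c r0 \<beta> :: real and \<Delta> :: ennreal
  assumes c: "c \<ge> 0"
    and rho_nonneg: "\<forall>x\<ge>0. rho x \<ge> 0"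
    and rho_mono: "mono_on {0..} rho"
    and rho_diff: "rho differentiable_on {0..}"
    and f_meas: "set_borel_measurable borel {0..} f"
    and g_meas: "set_borel_measurable borel {0..} g"
    and f_nonneg: "\<forall>x\<ge>0. f x \<ge> 0"
    and g_nonneg: "\<forall>x\<ge>0. g x \<ge> 0"
    and r0: "r0 \<ge> 0"
    and beta: "\<beta> \<ge> 0"
    and Delta_def: "\<Delta> = (SUP r\<in>{r0..}. epowr (rhobar rho (Gint g r0 r + ennreal c)) (1 + \<beta>)
                             * (\<integral>\<^sup>+ u\<in>{r..}. ennreal (f u) \<partial>lborel))"
    and Delta_fin: "\<Delta> < top"
  shows
    "(\<beta> > 0 \<longrightarrow>
       (\<forall>r\<ge>r0. (\<integral>\<^sup>+ u\<in>{r..}. rhobar rho (Gint g r0 u + ennreal c) * ennreal (f u) \<partial>lborel)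
          \<le> \<Delta> * ennreal ((1 + \<beta>) / \<beta>) * epowr (rhobar rho (Gint g r0 r + ennreal c)) (- \<beta>)))
     \<and>
     ((\<beta> = 0 \<and> ((\<integral>\<^sup>+ u\<in>{r0..}. ennreal (g u) \<partial>lborel) < top \<or> bounded (rho ` {0..}))) \<longrightarrow>
       (\<forall>r\<ge>r0. (\<integral>\<^sup>+ u\<in>{r..}. rhobar rho (Gint g r0 u + ennreal c) * ennreal (f u) \<partial>lborel)
          \<le> \<Delta> + \<Delta> *
             (let num = rhobar rho ((\<integral>\<^sup>+ u\<in>{r0..}. ennreal (g u) \<partial>lborel) + ennreal c);
                  den = rhobar rho (Gint g r0 r + ennreal c)
              in if den = 0 then top else ennreal (ln (enn2real num / enn2real den)))))"
proof -
  define h where "h u = rhobar rho (Gint g r0 u + ennreal c)" for u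
  define \<phi> where "\<phi> u = ennreal (indicator {0..} u * f u)" for u :: real
  define N where "N = rhobar rho ((\<integral>\<^sup>+u\<in>{r0..}. ennreal (g u) \<partial>lborel) + ennreal c)"
  have \<phi>_meas: "\<phi> \<in> borel_measurable borel"
    using f_meas unfolding \<phi>_def set_borel_measurable_def by simp
  have h_mono: "mono h"
    unfolding h_def by (intro monoI rhobar_mono[OF rho_mono] add_right_mono monoD[OF mono_Gint])
  have on_Ici: "(\<integral>\<^sup>+x\<in>{r..}. \<psi> x * ennreal (f x) \<partial>lborel) = (\<integral>\<^sup>+x\<in>{r..}. \<psi> x * \<phi> x \<partial>lborel)"
    if "r0 \<le> r" for r and \<psi> :: "real \<Rightarrow> ennreal"
    using that r0 by (intro nn_integral_cong) (auto simp: \<phi>_def indicator_def)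
  have \<Delta>: "epowr (h u) (1 + \<beta>) * (\<integral>\<^sup>+x\<in>{u..}. \<phi> x \<partial>lborel) \<le> \<Delta>" if "r0 \<le> u" for u
  proof -
    have "epowr (h u) (1 + \<beta>) * (\<integral>\<^sup>+x\<in>{u..}. ennreal (f x) \<partial>lborel) \<le> \<Delta>"
      unfolding Delta_def h_def by (rule SUP_upper) (use that in simp)
    then show ?thesis using on_Ici[OF that, of "\<lambda>_. 1"] by simp
  qed
  have part_i: "(\<integral>\<^sup>+u\<in>{r..}. h u * \<phi> u \<partial>lborel) \<le> \<Delta> * ennreal ((1 + \<beta>) / \<beta>) * epowr (h r) (- \<beta>)"
    if "0 < \<beta>" "r0 \<le> r" for r
    using that \<Delta> by (intro nn_integral_weighted_tail_le_powr[OF h_mono \<phi>_meas _ Delta_fin]) auto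
  have part_ii: "(\<integral>\<^sup>+u\<in>{r..}. h u * \<phi> u \<partial>lborel)
      \<le> \<Delta> + \<Delta> * (if h r = 0 then top else ennreal (ln (enn2real N / enn2real (h r))))"
    if "\<beta> = 0" and N_fin: "N < top" and "r0 \<le> r" for r
  proof (rule nn_integral_weighted_tail_le_ln[OF h_mono \<phi>_meas _ N_fin])
    show "h u \<le> N" for u
      unfolding h_def N_def by (intro rhobar_mono[OF rho_mono] add_right_mono Gint_le_nn_integral_Ici)
    show "h u * (\<integral>\<^sup>+x\<in>{u..}. \<phi> x \<partial>lborel) \<le> \<Delta>" if "r \<le> u" for u
      using \<Delta>[of u] that \<open>r0 \<le> r\<close> \<open>\<beta> = 0\<close> by (simp add: epowr_one)
  qed
  have "N < top" if "(\<integral>\<^sup>+u\<in>{r0..}. ennreal (g u) \<partial>lborel) < top \<or> bounded (rho ` {0..})"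
    unfolding N_def using that by (intro rhobar_less_top) auto
  with part_i part_ii on_Ici show ?thesis
    by (simp add: h_def N_def Let_def cong: if_cong)
qed

end
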